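(* Let $\mathbb{K}$ be a field of characteristic zero with algebraic closure $\overline{\mathbb{K}}$. Let $G(x,y)\in \mathbb{K}[x,y]$ be an irreducible polynomial with $d_x=\deg_x G$ and $d_y=\deg_y G$. Let $y(x)\in\overline{\mathbb{K}}((x))^*$ be a formal Puiseux series, expanded at $x=0$, satisfying $G(x,y(x))=0$, and let $\nu=\operatorname{ord}_x(y(x))$ and $\nu'=\min\{\nu,0\}$. Write $y(x)=\bar{y}(x)+\varphi(x)$ with $\bar{y}(x),\varphi(x)\in\overline{\mathbb{K}}((x))^*$ and $\operatorname{ord}_x(\varphi(x))>N>0$, where $$N\geq 2\,d_x\,d_y-2\,\nu'\,(d_y-1).$$ Assume that $A(x,y)\in\mathbb{K}[x,y]$ is a nonzero polynomial with $\deg_x A\leq d_x$ and $\deg_y A\leq d_y$ which is of minimal degree such that $$\operatorname{ord}_x\big(A(x,\bar{y}(x))\big)> 2\,d_x\,d_y-\nu'\,(d_y-1).$$ Then $A(x,y)$ is, up to a nonzero constant factor, equal to $G(x,y)$.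
   Context: For a field $\mathbb{L}$, $\mathbb{L}((x))^*=\bigcup_{n\geq 1}\mathbb{L}((x^{1/n}))$ denotes the field of formal Puiseux series expanded at $0$. For a nonzero Puiseux series $\varphi(x)=\sum_{j\geq j_0}a_j x^{j/n}$ with $a_{j_0}\neq 0$, its order is $\operatorname{ord}_x(\varphi)=j_0/n\in\mathbb{Q}$; and $\operatorname{ord}_x(0)=\infty$. *)

theory Defs
  imports "HOL-Computational_Algebra.Computational_Algebra" "HOL-Library.Extended_Real"
begin

text \<open>Bivariate polynomials K[x,y] are represented as \<open>'a poly poly\<close>:
  the outer variable is y, the coefficients are polynomials in x.\<close>

definition deg_x :: "'a::zero poly poly \<Rightarrow> nat" where
  "deg_x A = Max ((\<lambda>j. degree (coeff A j)) ` {..degree A})"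

abbreviation deg_y :: "'a::zero poly poly \<Rightarrow> nat" where
  "deg_y A \<equiv> degree A"

definition tot_deg :: "'a::zero poly poly \<Rightarrow> nat" where
  "tot_deg A = Max ({0} \<union> {i + j | i j. coeff (coeff A j) i \<noteq> 0})"

definition is_alg_closure_emb :: "('a::field \<Rightarrow> 'b::field) \<Rightarrow> bool" where
  "is_alg_closure_emb h \<longleftrightarrow>
     inj h \<and> h 1 = 1 \<and> (\<forall>a b. h (a + b) = h a + h b) \<and> (\<forall>a b. h (a * b) = h a * h b) \<and>
     (\<forall>p :: 'b poly. degree p > 0 \<longrightarrow> (\<exists>z. poly p z = 0)) \<and>
     (\<forall>z :: 'b. \<exists>p :: 'a poly. p \<noteq> 0 \<and> poly (map_poly h p) z = 0)"

text \<open>A Puiseux series in \<open>L((x))^*\<close> with denominator \<open>n \<ge> 1\<close> is represented by a formal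
  Laurent series \<open>F\<close> in \<open>t = x^(1/n)\<close>, i.e. it is \<open>F(x^(1/n))\<close>.\<close>
definition eval_puiseux ::
  "('a::field \<Rightarrow> 'b::field) \<Rightarrow> nat \<Rightarrow> 'a poly poly \<Rightarrow> 'b fls \<Rightarrow> 'b fls" where
  "eval_puiseux h n A F =
     (\<Sum>j\<le>degree A. (\<Sum>i\<le>degree (coeff A j).
         fls_const (h (coeff (coeff A j) i)) * fls_X ^ (n * i)) * F ^ j)"

text \<open>Order in x of the Puiseux series \<open>F(x^(1/n))\<close>; order of 0 is \<open>\<infinity>\<close>.\<close>
definition ord_x :: "nat \<Rightarrow> 'b::zero fls \<Rightarrow> ereal" where
  "ord_x n F = (if F = 0 then \<infinity> else ereal (real_of_int (fls_subdegree F) / real n))"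

end

(* Replacing ybar by y changes A(x, ybar) only by a multiple of phi, so A(x, y(x)) still has order
   greater than 2 d_x d_y - nu' (d_y - 1).  The resultant r = Res_y(A, G) = U A + V G, with
   deg_y U < d_y, is a polynomial in x of degree at most d_x (d_y + deg_y A) <= 2 d_x d_y; at
   y = y(x) the term V G vanishes and ord U(x, y(x)) >= (d_y - 1) nu', so ord r > 2 d_x d_y
   and hence r = 0.  A vanishing resultant yields U A + V G = 0 with U <> 0 and deg_y U < d_y;
   by Gauss's lemma the irreducible G is prime in K[x][y], so G divides A, and the degree
   bounds leave only a constant factor. *)

theory Submission
  imports Defs "Jordan_Normal_Form.Char_Poly"
begin

hide_const (open) Module.module.smult

lemma inj_comm_ring_hom_if_alg_closure_emb:
  assumes "is_alg_closure_emb h"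
  shows "inj_comm_ring_hom h"
proof -
  from assms have "inj h" and hom: "h 1 = 1" "\<And>a b. h (a + b) = h a + h b"
      "\<And>a b. h (a * b) = h a * h b"
    unfolding is_alg_closure_emb_def by auto
  moreover from hom(2)[of 0 0] have "h 0 = 0" by (metis add_cancel_right_right)
  ultimately show ?thesis
    by unfold_locales (auto, metis injD)
qed

lemma comm_ring_hom_eval_poly:
  assumes "comm_ring_hom f"
  shows "comm_ring_hom (\<lambda>p. eval_poly f p x)"
proof -
  interpret comm_ring_hom f by fact
  interpret mp: map_poly_comm_ring_hom f ..
  show ?thesis
    by unfold_locales (auto simp: eval_poly_def mp.hom_add mp.hom_mult)
qed

definition fls_embed :: "('a::comm_ring_1 \<Rightarrow> 'b::comm_ring_1) \<Rightarrow> nat \<Rightarrow> 'a poly \<Rightarrow> 'b fls" where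
  "fls_embed h n p = eval_poly (\<lambda>c. fls_const (h c)) p (fls_X ^ n)"

lemma comm_ring_hom_fls_embed:
  assumes "comm_ring_hom h"
  shows "comm_ring_hom (fls_embed h n)"
proof -
  interpret comm_ring_hom h by fact
  have "comm_ring_hom (\<lambda>c. fls_const (h c))"
    by unfold_locales (auto simp: hom_distribs fls_plus_const)
  then show ?thesis
    unfolding fls_embed_def[abs_def] by (rule comm_ring_hom_eval_poly)
qed

lemma fls_embed_as_sum:
  assumes "comm_ring_hom h"
  shows "fls_embed h n p = (\<Sum>i\<le>degree p. fls_const (h (coeff p i)) * fls_X ^ (n * i))"
proof -
  interpret comm_ring_hom h by fact
  show ?thesis
    unfolding fls_embed_def by (subst eval_poly_as_sum) (auto simp flip: power_mult simp: mult.commute)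
qed

lemma eval_puiseux_eq_eval_poly:
  assumes "comm_ring_hom h"
  shows "eval_puiseux h n P F = eval_poly (fls_embed h n) P F"
proof -
  interpret h: comm_ring_hom h by fact
  interpret comm_ring_hom "fls_embed h n" using comm_ring_hom_fls_embed[OF assms] .
  show ?thesis
    unfolding eval_puiseux_def
    by (subst eval_poly_as_sum) (auto simp: fls_embed_as_sum[OF assms] mult.commute)
qed

(* Orders are measured in t = x^(1/n), i.e. they are n times ord_x; this keeps all bounds integral. *)
definition fls_ord_ge :: "'a::zero fls \<Rightarrow> int \<Rightarrow> bool" where
  "fls_ord_ge f k \<longleftrightarrow> f = 0 \<or> k \<le> fls_subdegree f"

lemma fls_ord_ge_0 [simp]: "fls_ord_ge 0 k"
  by (simp add: fls_ord_ge_def)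

lemma fls_ord_ge_mono: "fls_ord_ge f k \<Longrightarrow> k' \<le> k \<Longrightarrow> fls_ord_ge f k'"
  by (auto simp: fls_ord_ge_def)

lemma fls_ord_ge_add: "fls_ord_ge f k \<Longrightarrow> fls_ord_ge g k \<Longrightarrow> fls_ord_ge (f + g) k"
  using fls_plus_subdegree[of f g] by (force simp: fls_ord_ge_def)

lemma fls_ord_ge_diff:
  fixes f g :: "'a::ab_group_add fls"
  shows "fls_ord_ge f k \<Longrightarrow> fls_ord_ge g k \<Longrightarrow> fls_ord_ge (f - g) k"
  using fls_ord_ge_add[of f k "- g"] by (simp add: fls_ord_ge_def)

lemma fls_ord_ge_sum: "(\<And>i. i \<in> A \<Longrightarrow> fls_ord_ge (f i) k) \<Longrightarrow> fls_ord_ge (sum f A) k"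
  by (induction A rule: infinite_finite_induct) (auto intro: fls_ord_ge_add)

lemma fls_ord_ge_mult:
  fixes f g :: "'a::semiring_1_no_zero_divisors fls"
  shows "fls_ord_ge f a \<Longrightarrow> fls_ord_ge g b \<Longrightarrow> fls_ord_ge (f * g) (a + b)"
  by (cases "f = 0 \<or> g = 0") (auto simp: fls_ord_ge_def)

lemma fls_ord_ge_power:
  fixes f :: "'a::semiring_1_no_zero_divisors fls"
  assumes "fls_ord_ge f a"
  shows "fls_ord_ge (f ^ i) (int i * a)"
proof (induction i)
  case (Suc i)
  from fls_ord_ge_mult[OF assms Suc.IH] show ?case
    by (simp add: algebra_simps)
qed (simp add: fls_ord_ge_def)

lemma fls_ord_ge_power_diff:
  fixes F G :: "'a::idom fls"
  assumes "fls_ord_ge F mu" "fls_ord_ge G mu" "fls_ord_ge (F - G) c"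
  shows "fls_ord_ge (F ^ i - G ^ i) (c + (int i - 1) * mu)"
proof (cases "i = 0")
  case False
  have "fls_ord_ge (G ^ (i - Suc j) * F ^ j) ((int i - 1) * mu)" if "j < i" for j
    using fls_ord_ge_mult[OF fls_ord_ge_power[OF assms(2)] fls_ord_ge_power[OF assms(1)],
        of "i - Suc j" j] that
    by (simp add: of_nat_diff algebra_simps)
  then have "fls_ord_ge (\<Sum>j<i. G ^ (i - Suc j) * F ^ j) ((int i - 1) * mu)"
    by (auto intro: fls_ord_ge_sum)
  then show ?thesis
    unfolding power_diff_sumr2[of F i G] by (rule fls_ord_ge_mult[OF assms(3)])
qed simp

lemma fls_ord_ge_eval_poly:
  fixes f :: "'a::zero \<Rightarrow> 'b::idom fls"
  assumes "f 0 = 0" "\<And>x. fls_ord_ge (f x) 0" "degree P \<le> k" "fls_ord_ge F mu" "mu \<le> 0"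
  shows "fls_ord_ge (eval_poly f P F) (int k * mu)"
  unfolding eval_poly_as_sum[of f, OF assms(1)]
proof (rule fls_ord_ge_sum)
  fix i assume "i \<in> {..degree P}"
  with assms(3,5) have "int k * mu \<le> int i * mu + 0"
    by (simp add: mult_right_mono_neg)
  then show "fls_ord_ge (F ^ i * f (coeff P i)) (int k * mu)"
    by (rule fls_ord_ge_mono[OF fls_ord_ge_mult[OF fls_ord_ge_power[OF assms(4)] assms(2)]])
qed

lemma fls_ord_ge_eval_poly_diff:
  fixes f :: "'a::zero \<Rightarrow> 'b::idom fls"
  assumes "f 0 = 0" "\<And>x. fls_ord_ge (f x) 0" "degree P \<le> k"
    and "fls_ord_ge F mu" "fls_ord_ge G mu" "mu \<le> 0" "fls_ord_ge (F - G) c"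
  shows "fls_ord_ge (eval_poly f P F - eval_poly f P G) (c + (int k - 1) * mu)"
proof -
  have "eval_poly f P F - eval_poly f P G = (\<Sum>i\<le>degree P. (F ^ i - G ^ i) * f (coeff P i))"
    by (simp add: eval_poly_as_sum[of f, OF assms(1)] sum_subtractf left_diff_distrib)
  also have "fls_ord_ge \<dots> (c + (int k - 1) * mu)"
  proof (rule fls_ord_ge_sum)
    fix i assume "i \<in> {..degree P}"
    with assms(3,6) have "c + (int k - 1) * mu \<le> c + (int i - 1) * mu + 0"
      by (simp add: mult_right_mono_neg)
    then show "fls_ord_ge ((F ^ i - G ^ i) * f (coeff P i)) (c + (int k - 1) * mu)"
      by (rule fls_ord_ge_mono[OF fls_ord_ge_mult[OF fls_ord_ge_power_diff[OF assms(4,5,7)] assms(2)]])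
  qed
  finally show ?thesis .
qed

lemma fls_ord_ge_fls_embed:
  fixes h :: "'a::comm_ring_1 \<Rightarrow> 'b::idom"
  assumes "comm_ring_hom h"
  shows "fls_ord_ge (fls_embed h n p) 0"
proof -
  have "fls_ord_ge (fls_const c * fls_X ^ k) 0" for c :: 'b and k
    by (rule fls_ord_ge_mono[OF fls_ord_ge_mult[of _ 0 _ "int k"]]) (simp_all add: fls_ord_ge_def)
  then show ?thesis
    unfolding fls_embed_as_sum[OF assms] by (intro fls_ord_ge_sum)
qed

lemma fls_embed_not_ord_ge:
  assumes "inj_comm_ring_hom h" "n \<ge> 1" "p \<noteq> 0"
  shows "\<not> fls_ord_ge (fls_embed h n p) (int (n * degree p) + 1)"
proof -
  interpret inj_comm_ring_hom h by fact
  have "fls_nth (fls_embed h n p) (int (n * degree p)) =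
      (\<Sum>i\<le>degree p. if i = degree p then h (coeff p i) else 0)"
    unfolding fls_embed_as_sum[OF comm_ring_hom_axioms] fls_nth_sum
    by (rule sum.cong) (use assms(2) in auto)
  also have "\<dots> \<noteq> 0"
    using assms(3) by simp
  finally show ?thesis
    by (auto simp: fls_ord_ge_def dest: fls_subdegree_leI)
qed

(* Column i of the matrix holds the coefficients of y^i A for i < d and of y^(i-d) G otherwise,
   so M v is the coefficient vector of U A + V G; for d = deg G and m = deg A this is the
   transposed Sylvester matrix. *)
definition sylvester_basis :: "'a::comm_semiring_1 poly \<Rightarrow> 'a poly \<Rightarrow> nat \<Rightarrow> nat \<Rightarrow> 'a poly" where
  "sylvester_basis A G d i = (if i < d then monom 1 i * A else monom 1 (i - d) * G)"

definition sylvester_matrix :: "'a::comm_semiring_1 poly \<Rightarrow> 'a poly \<Rightarrow> nat \<Rightarrow> nat \<Rightarrow> 'a mat" where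
  "sylvester_matrix A G d m = mat (d + m) (d + m) (\<lambda>(k, i). coeff (sylvester_basis A G d i) k)"

lemma sum_sylvester_basis:
  "(\<Sum>i<d + m. smult (u i) (sylvester_basis A G d i)) =
     (\<Sum>i<d. monom (u i) i) * A + (\<Sum>j<m. monom (u (d + j)) j) * G"
proof -
  have "(\<Sum>i<d + m. smult (u i) (sylvester_basis A G d i)) =
      (\<Sum>i<d. smult (u i) (sylvester_basis A G d i)) +
      (\<Sum>j<m. smult (u (d + j)) (sylvester_basis A G d (d + j)))"
    by (induction m) (auto simp: add.assoc)
  also have "\<dots> = (\<Sum>i<d. monom (u i) i) * A + (\<Sum>j<m. monom (u (d + j)) j) * G"
    by (simp add: sylvester_basis_def sum_distrib_right smult_monom flip: mult_smult_left)
  finally show ?thesis .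
qed

lemma degree_sylvester_basis:
  assumes "degree A \<le> m" "degree G \<le> d" "i < d + m"
  shows "degree (sylvester_basis A G d i) < d + m"
proof -
  have shift: "degree (monom 1 k * P) \<le> k + degree P" for k and P :: "'a poly"
    using order_trans[OF degree_mult_le add_right_mono[OF degree_monom_le]] .
  show ?thesis
    using assms shift[of i A] shift[of "i - d" G] unfolding sylvester_basis_def by auto
qed

lemma coeff_sum_sylvester_basis:
  assumes "degree A \<le> m" "degree G \<le> d" "v \<in> carrier_vec (d + m)"
  shows "coeff (\<Sum>i<d + m. smult (v $ i) (sylvester_basis A G d i)) k =
    (if k < d + m then (sylvester_matrix A G d m *\<^sub>v v) $ k else 0)"
proof (cases "k < d + m")
  case True
  with assms(3) show ?thesis
    by (auto simp: coeff_sum sylvester_matrix_def scalar_prod_def atLeast0LessThan mult.commute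
        intro!: sum.cong)
next
  case False
  have "coeff (sylvester_basis A G d i) k = 0" if "i < d + m" for i
    using degree_sylvester_basis[OF assms(1,2) that] False by (intro coeff_eq_0) simp
  with False show ?thesis
    by (auto simp: coeff_sum intro!: sum.neutral)
qed

lemma coeff_sum_monom: "coeff (\<Sum>i<d. monom (u i) i) k = (if k < d then u k else 0)"
  by (simp add: coeff_sum coeff_monom)

lemma degree_sum_monom_less: "d \<ge> 1 \<Longrightarrow> degree (\<Sum>i<d. monom (u i) i) < d"
  by (rule degree_sum_less) (auto intro: le_less_trans[OF degree_monom_le])

lemma sylvester_det_combination:
  fixes A G :: "'a::comm_ring_1 poly"
  assumes "degree A \<le> m" "degree G \<le> d" "d \<ge> 1"
  shows "\<exists>U V. U * A + V * G = [:det (sylvester_matrix A G d m):] \<and> degree U < d"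
proof -
  let ?M = "sylvester_matrix A G d m"
  have M: "?M \<in> carrier_mat (d + m) (d + m)"
    by (simp add: sylvester_matrix_def)
  define v where "v = col (adj_mat ?M) 0"
  have v: "v \<in> carrier_vec (d + m)"
    using adj_mat(1)[OF M] by (metis carrier_matD(1) carrier_vecI dim_col v_def)
  have "?M *\<^sub>v v = col (det ?M \<cdot>\<^sub>m 1\<^sub>m (d + m)) 0"
    using adj_mat[OF M] assms(3) M by (simp add: v_def col_mult2[symmetric])
  then have "coeff (\<Sum>i<d + m. smult (v $ i) (sylvester_basis A G d i)) k = coeff [:det ?M:] k" for k
    using assms(3) by (auto simp: coeff_sum_sylvester_basis[OF assms(1,2) v] coeff_pCons split: nat.split)
  then have "(\<Sum>j<d. monom (v $ j) j) * A + (\<Sum>j<m. monom (v $ (d + j)) j) * G = [:det ?M:]"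
    by (simp add: poly_eqI flip: sum_sylvester_basis)
  with degree_sum_monom_less[OF assms(3)] show ?thesis
    by blast
qed

lemma sylvester_det_eq_0:
  fixes A G :: "'a::idom poly"
  assumes "degree A \<le> m" "degree G \<le> d" "G \<noteq> 0" "det (sylvester_matrix A G d m) = 0"
  shows "\<exists>U V. U * A + V * G = 0 \<and> U \<noteq> 0 \<and> degree U < d"
proof -
  let ?M = "sylvester_matrix A G d m"
  have M: "?M \<in> carrier_mat (d + m) (d + m)"
    by (simp add: sylvester_matrix_def)
  obtain v where v: "v \<in> carrier_vec (d + m)" "v \<noteq> 0\<^sub>v (d + m)" "?M *\<^sub>v v = 0\<^sub>v (d + m)"
    using assms(4) det_0_iff_vec_prod_zero[OF M] by auto
  define U where "U = (\<Sum>j<d. monom (v $ j) j)"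
  define V where "V = (\<Sum>j<m. monom (v $ (d + j)) j)"
  have "coeff (\<Sum>i<d + m. smult (v $ i) (sylvester_basis A G d i)) k = 0" for k
    using v(3) by (simp add: coeff_sum_sylvester_basis[OF assms(1,2) v(1)])
  then have UV: "U * A + V * G = 0"
    unfolding U_def V_def by (simp add: poly_eqI flip: sum_sylvester_basis)
  have U: "U \<noteq> 0"
  proof
    assume "U = 0"
    with UV assms(3) have "V = 0" by simp
    have "v $ i = 0" if "i < d + m" for i
    proof (cases "i < d")
      case True
      then show ?thesis using arg_cong[OF \<open>U = 0\<close>, of "\<lambda>p. coeff p i"]
        by (simp add: U_def coeff_sum_monom)
    next
      case False
      define j where "j = i - d"
      have "i = d + j" "j < m"
        using False that by (auto simp: j_def)
      then show ?thesis
        using arg_cong[OF \<open>V = 0\<close>, of "\<lambda>p. coeff p j"] by (simp add: V_def coeff_sum_monom)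
    qed
    with v(1,2) show False
      by (auto simp: vec_eq_iff)
  qed
  then have "d \<ge> 1"
    by (cases d) (auto simp: U_def)
  with UV U show ?thesis
    using degree_sum_monom_less unfolding U_def by blast
qed

lemma degree_det_sylvester_matrix:
  fixes A G :: "'a::idom poly poly"
  assumes "\<And>j. degree (coeff A j) \<le> D" "\<And>j. degree (coeff G j) \<le> D"
  shows "degree (det (sylvester_matrix A G d m)) \<le> D * (d + m)"
  by (rule degree_det_le)
    (auto simp: sylvester_matrix_def sylvester_basis_def coeff_monom_mult assms)

lemma prime_elem_const_poly_if_kernel:
  fixes f :: "'a::{idom_divide,algebraic_semidom} \<Rightarrow> 'b::idom"
  assumes "comm_ring_hom f" "m \<noteq> 0" "\<not> is_unit m" "\<And>p. m dvd p \<longleftrightarrow> f p = 0"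
  shows "prime_elem [:m:]"
proof -
  interpret comm_ring_hom f by fact
  interpret mp: map_poly_comm_ring_hom f ..
  have dvd_iff: "[:m:] dvd P \<longleftrightarrow> map_poly f P = 0" for P
    by (simp add: const_poly_dvd_iff poly_eq_iff coeff_map_poly assms(4))
  show ?thesis
  proof (rule prime_elemI)
    show "[:m:] \<noteq> 0" "\<not> [:m:] dvd 1"
      using assms(2,3) by (simp_all add: is_unit_const_poly_iff)
  next
    fix P Q assume "[:m:] dvd P * Q"
    then show "[:m:] dvd P \<or> [:m:] dvd Q"
      by (simp add: dvd_iff mp.hom_mult)
  qed
qed

lemma minimal_polynomial_dvd_iff:
  fixes h :: "'a::field \<Rightarrow> 'b::field"
  assumes "inj_comm_ring_hom h" "c \<noteq> 0" "eval_poly h c a = 0"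
  shows "\<exists>m. m dvd c \<and> degree m \<ge> 1 \<and> (\<forall>p. m dvd p \<longleftrightarrow> eval_poly h p a = 0)"
proof -
  interpret inj_comm_ring_hom h by fact
  interpret ev: comm_ring_hom "\<lambda>p. eval_poly h p a"
    by (rule comm_ring_hom_eval_poly) unfold_locales
  let ?vanishing = "\<lambda>p. p \<noteq> 0 \<and> eval_poly h p a = 0"
  obtain m where m: "?vanishing m" and minimal: "\<And>p. ?vanishing p \<Longrightarrow> degree m \<le> degree p"
    using ex_has_least_nat[of ?vanishing c degree] assms(2,3) by blast
  have iff: "m dvd p \<longleftrightarrow> eval_poly h p a = 0" for p
  proof
    assume "m dvd p"
    then show "eval_poly h p a = 0"
      using m by (auto elim: dvdE simp: ev.hom_mult)
  next
    assume p: "eval_poly h p a = 0"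
    have "eval_poly h (p mod m) a = 0"
      using ev.hom_add[of "m * (p div m)" "p mod m"] ev.hom_mult[of m "p div m"] p m by simp
    with minimal[of "p mod m"] degree_mod_less[of m p] m have "p mod m = 0"
      by fastforce
    then show "m dvd p"
      by (simp add: dvd_eq_mod_eq_0)
  qed
  have "degree m \<ge> 1"
  proof (rule ccontr)
    assume "\<not> degree m \<ge> 1"
    then obtain m0 where "m = [:m0:]"
      by (metis degree_0_id less_one not_le)
    with m show False
      by (simp add: eval_poly_as_sum)
  qed
  with iff assms(3) show ?thesis
    by blast
qed

lemma exists_prime_const_poly_factor:
  fixes h :: "'a::field \<Rightarrow> 'b::field" and c :: "'a poly"
  assumes "is_alg_closure_emb h" "degree c \<ge> 1"
  shows "\<exists>m. m dvd c \<and> degree m \<ge> 1 \<and> prime_elem ([:m:] :: 'a poly poly)"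
proof -
  interpret inj_comm_ring_hom h
    using assms(1) by (rule inj_comm_ring_hom_if_alg_closure_emb)
  have "\<forall>p :: 'b poly. degree p > 0 \<longrightarrow> (\<exists>z. poly p z = 0)"
    using assms(1) by (simp add: is_alg_closure_emb_def)
  then obtain a where "eval_poly h c a = 0"
    using assms(2) by (auto simp: eval_poly_def dest: spec[of _ "map_poly h c"])
  moreover have "c \<noteq> 0"
    using assms(2) by auto
  ultimately obtain m where m: "m dvd c" "degree m \<ge> 1" "\<And>p. m dvd p \<longleftrightarrow> eval_poly h p a = 0"
    using minimal_polynomial_dvd_iff[OF inj_comm_ring_hom_axioms] by blast
  have "prime_elem ([:m:] :: 'a poly poly)"
    using m(2,3) by (intro prime_elem_const_poly_if_kernel[OF comm_ring_hom_eval_poly])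
      (auto simp: is_unit_iff_degree intro: comm_ring_hom_axioms)
  with m(1,2) show ?thesis
    by blast
qed

lemma degree_coeff_le_deg_x: "degree (coeff P j) \<le> deg_x P"
proof (cases "j \<le> degree P")
  case True
  then show ?thesis
    unfolding deg_x_def by (intro Max_ge) auto
qed (simp add: coeff_eq_0)

lemma deg_x_attained:
  assumes "P \<noteq> 0"
  obtains j where "coeff P j \<noteq> 0" "degree (coeff P j) = deg_x P"
proof -
  have "deg_x P \<in> (\<lambda>j. degree (coeff P j)) ` {..degree P}"
    unfolding deg_x_def by (rule Max_in) auto
  then obtain j where "degree (coeff P j) = deg_x P"
    by auto
  with assms degree_coeff_le_deg_x[of P "degree P"] show ?thesis
    by (cases "coeff P j = 0") (auto intro: that[of j] that[of "degree P"])
qed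

lemma const_multiple_if_dvd:
  fixes G A :: "'a::field poly poly"
  assumes "G dvd A" "A \<noteq> 0" "deg_x A \<le> deg_x G" "degree A \<le> degree G"
  shows "\<exists>c. c \<noteq> 0 \<and> A = smult [:c:] G"
proof -
  from assms(1) obtain q where q: "A = G * q" ..
  with assms(2) have "G \<noteq> 0" "q \<noteq> 0"
    by auto
  with q assms(4) have "degree q = 0"
    by (simp add: degree_mult_eq)
  then obtain p where p: "A = smult p G" "p \<noteq> 0"
    using q \<open>q \<noteq> 0\<close> by (elim degree_eq_zeroE) (auto simp: mult.commute)
  obtain j where "coeff G j \<noteq> 0" "degree (coeff G j) = deg_x G"
    using deg_x_attained[OF \<open>G \<noteq> 0\<close>] .
  with p assms(3) degree_coeff_le_deg_x[of A j] have "degree p = 0"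
    by (simp add: degree_mult_eq)
  with p show ?thesis
    by (elim degree_eq_zeroE) auto
qed

lemma fls_ord_ge_if_ord_x_gt:
  assumes "n \<ge> 1" "ord_x n F > ereal (of_int k / real n)"
  shows "fls_ord_ge F (k + 1)"
  using assms by (auto simp: ord_x_def fls_ord_ge_def divide_less_cancel split: if_splits)

lemma min_ord_x_0:
  fixes Y :: "'a::zero fls"
  assumes "n \<ge> 1"
  obtains mu where "fls_ord_ge Y mu" "mu \<le> 0" "min (ord_x n Y) 0 = ereal (of_int mu / real n)"
proof
  define mu where "mu = (if Y = 0 then 0 else min (fls_subdegree Y) 0)"
  show "fls_ord_ge Y mu" "mu \<le> 0"
    by (auto simp: mu_def fls_ord_ge_def)
  show "min (ord_x n Y) 0 = ereal (of_int mu / real n)"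
    using assms by (auto simp: mu_def ord_x_def min_def divide_le_0_iff)
qed

lemma degree_ge_1_if_eval_fls_embed_eq_0:
  assumes "inj_comm_ring_hom h" "n \<ge> 1" "G \<noteq> 0" "eval_poly (fls_embed h n) G Y = 0"
  shows "degree G \<ge> 1"
proof (rule ccontr)
  interpret comm_ring_hom "fls_embed h n"
    using assms(1) by (intro comm_ring_hom_fls_embed) (rule inj_comm_ring_hom.axioms)
  assume "\<not> degree G \<ge> 1"
  then have "degree G = 0"
    by simp
  then obtain g where "G = [:g:]"
    by (elim degree_eq_zeroE)
  with assms(3,4) have "g \<noteq> 0" "fls_embed h n g = 0"
    by (simp_all add: eval_poly_as_sum)
  with fls_embed_not_ord_ge[OF assms(1,2)] show False
    by fastforce
qed

lemma sylvester_det_eq_0_if_high_order: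
  fixes h :: "'a::field \<Rightarrow> 'b::field" and G A :: "'a poly poly"
  assumes hom: "inj_comm_ring_hom h" and n: "n \<ge> 1" and d: "degree G \<ge> 1"
    and deg_A: "degree A \<le> degree G" "deg_x A \<le> deg_x G"
    and root: "eval_poly (fls_embed h n) G Y = 0"
    and Y: "fls_ord_ge Y mu" "mu \<le> 0"
    and A_Y: "fls_ord_ge (eval_poly (fls_embed h n) A Y)
      (int (2 * deg_x G * degree G * n) - (int (degree G) - 1) * mu + 1)"
  shows "det (sylvester_matrix A G (degree G) (degree A)) = 0"
proof (rule ccontr)
  interpret h: inj_comm_ring_hom h by fact
  interpret emb: comm_ring_hom "fls_embed h n"
    by (rule comm_ring_hom_fls_embed) unfold_locales
  interpret ev: comm_ring_hom "\<lambda>P. eval_poly (fls_embed h n) P Y"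
    by (rule comm_ring_hom_eval_poly) unfold_locales
  let ?r = "det (sylvester_matrix A G (degree G) (degree A))"
  assume "?r \<noteq> 0"
  obtain U V where UV: "U * A + V * G = [:?r:]" "degree U < degree G"
    using sylvester_det_combination[OF order.refl order.refl d] by blast
  have "fls_embed h n ?r = eval_poly (fls_embed h n) U Y * eval_poly (fls_embed h n) A Y"
    using arg_cong[OF UV(1), of "\<lambda>P. eval_poly (fls_embed h n) P Y"] root
    by (simp add: ev.hom_add ev.hom_mult eval_poly_as_sum[of "fls_embed h n" "[:_:]"])
  also have "fls_ord_ge \<dots> (int (degree G - 1) * mu +
      (int (2 * deg_x G * degree G * n) - (int (degree G) - 1) * mu + 1))"
  proof (rule fls_ord_ge_mult[OF _ A_Y])
    show "fls_ord_ge (eval_poly (fls_embed h n) U Y) (int (degree G - 1) * mu)"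
      using UV(2) Y
      by (intro fls_ord_ge_eval_poly[of "fls_embed h n", OF emb.hom_zero
            fls_ord_ge_fls_embed[OF h.comm_ring_hom_axioms]]) auto
  qed
  finally have ord_r: "fls_ord_ge (fls_embed h n ?r) (int (2 * deg_x G * degree G * n) + 1)"
    using d by (simp add: of_nat_diff algebra_simps)
  have "degree ?r \<le> deg_x G * (degree G + degree A)"
    using degree_coeff_le_deg_x[of A] degree_coeff_le_deg_x[of G] deg_A(2)
    by (intro degree_det_sylvester_matrix) (auto intro: order.trans)
  also have "\<dots> \<le> deg_x G * (2 * degree G)"
    using deg_A(1) by simp
  finally have "n * degree ?r \<le> 2 * deg_x G * degree G * n"
    by (simp add: mult_le_mono2 ac_simps)
  then have "int (n * degree ?r) + 1 \<le> int (2 * deg_x G * degree G * n) + 1"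
    by (simp only: of_nat_le_iff add_le_cancel_right)
  with ord_r have "fls_ord_ge (fls_embed h n ?r) (int (n * degree ?r) + 1)"
    by (rule fls_ord_ge_mono)
  with fls_embed_not_ord_ge[OF hom n \<open>?r \<noteq> 0\<close>] show False
    by blast
qed

lemma fls_ord_ge_eval_fls_embed_perturb:
  fixes h :: "'a::comm_ring_1 \<Rightarrow> 'b::idom"
  assumes "comm_ring_hom h" "degree P \<le> d" "fls_ord_ge Y mu" "mu \<le> 0" "mu \<le> c"
    and "fls_ord_ge (Y - Ybar) c"
    and "fls_ord_ge (eval_poly (fls_embed h n) P Ybar) (c + (int d - 1) * mu)"
  shows "fls_ord_ge (eval_poly (fls_embed h n) P Y) (c + (int d - 1) * mu)"
proof -
  interpret emb: comm_ring_hom "fls_embed h n"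
    using assms(1) by (rule comm_ring_hom_fls_embed)
  have "fls_ord_ge Ybar mu"
    using fls_ord_ge_diff[OF assms(3) fls_ord_ge_mono[OF assms(6,5)]] by simp
  then have "fls_ord_ge (eval_poly (fls_embed h n) P Y - eval_poly (fls_embed h n) P Ybar)
      (c + (int d - 1) * mu)"
    using assms(2-4,6)
    by (intro fls_ord_ge_eval_poly_diff[of "fls_embed h n", OF emb.hom_zero
          fls_ord_ge_fls_embed[OF assms(1)]])
  from fls_ord_ge_add[OF this assms(7)] show ?thesis
    by simp
qed

(* For an arbitrary field K the library does not make K[x][y] factorial; the assumption of this
   context replaces that and is discharged by exists_prime_const_poly_factor. *)
context
  assumes factors: "\<And>c :: 'a::field poly. degree c \<ge> 1 \<Longrightarrow>
    \<exists>m. m dvd c \<and> degree m \<ge> 1 \<and> prime_elem [:m:]"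
begin

lemma irreducible_smult_eq_mult:
  fixes G :: "'a::field poly poly"
  assumes irr: "irreducible G"
  shows "c \<noteq> 0 \<Longrightarrow> smult c G = Q * W \<Longrightarrow> degree Q = 0 \<or> degree W = 0"
proof (induction "degree c" arbitrary: c Q W rule: less_induct)
  case less
  show ?case
  proof (cases "degree c = 0")
    case True
    with less.prems have "is_unit [:c:]"
      by (simp add: is_unit_const_poly_iff is_unit_iff_degree)
    with irr have "irreducible (Q * W)"
      using irreducible_mult_unit_left[of "[:c:]" G] less.prems(2) by simp
    then have "is_unit Q \<or> is_unit W"
      by (auto dest: irreducibleD)
    then show ?thesis
      by (auto simp: is_unit_poly_iff)
  next
    case False
    with factors[of c] obtain m where "m dvd c" and m: "degree m \<ge> 1" "prime_elem [:m:]"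
      by auto
    then obtain c' where c: "c = m * c'"
      by (elim dvdE)
    with m less.prems(1) have c': "c' \<noteq> 0" "degree c' < degree c" "m \<noteq> 0"
      by (auto simp: degree_mult_eq)
    have "smult c G = [:m:] * smult c' G"
      by (simp add: c mult.commute)
    then have "[:m:] dvd Q * W"
      using less.prems(2) by (metis dvd_triv_left)
    with m(2) consider Q' where "Q = smult m Q'" | W' where "W = smult m W'"
      by (auto simp: prime_elem_dvd_mult_iff elim!: dvdE)
    then show ?thesis
    proof cases
      case 1
      with less.prems(2) c have "smult m (smult c' G) = smult m (Q' * W)"
        by simp
      then have "smult c' G = Q' * W"
        by (rule smult_cancel[OF c'(3)])
      from less.hyps[OF c'(2,1) this] show ?thesis
        using 1 c'(3) by simp
    next
      case 2
      with less.prems(2) c have "smult m (smult c' G) = smult m (Q * W')"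
        by simp
      then have "smult c' G = Q * W'"
        by (rule smult_cancel[OF c'(3)])
      from less.hyps[OF c'(2,1) this] show ?thesis
        using 2 c'(3) by simp
    qed
  qed
qed

lemma irreducible_dvd_smult_imp_dvd:
  fixes G :: "'a::field poly poly"
  assumes irr: "irreducible G" and deg: "degree G \<ge> 1"
  shows "c \<noteq> 0 \<Longrightarrow> G dvd smult c A \<Longrightarrow> G dvd A"
proof (induction "degree c" arbitrary: c A rule: less_induct)
  case less
  show ?case
  proof (cases "degree c = 0")
    case True
    with less.prems have "is_unit [:c:]"
      by (simp add: is_unit_const_poly_iff is_unit_iff_degree)
    with less.prems(2) show ?thesis
      using dvd_mult_unit_iff'[of "[:c:]" G A] by simp
  next
    case False
    with factors[of c] obtain m where "m dvd c" and m: "degree m \<ge> 1" "prime_elem [:m:]"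
      by auto
    then obtain c' where c: "c = m * c'"
      by (elim dvdE)
    with m less.prems(1) have c': "c' \<noteq> 0" "degree c' < degree c" "m \<noteq> 0"
      by (auto simp: degree_mult_eq)
    from less.prems(2) obtain Q where Q: "smult c A = G * Q"
      by (elim dvdE)
    have "smult c A = [:m:] * smult c' A"
      by (simp add: c mult.commute)
    then have "[:m:] dvd G * Q"
      using Q by (metis dvd_triv_left)
    moreover have "\<not> [:m:] dvd G"
    proof
      assume "[:m:] dvd G"
      then obtain G' where "G = [:m:] * G'" ..
      then have "is_unit G'"
        using irreducibleD[OF irr] prime_elem_not_unit[OF m(2)] by blast
      with \<open>G = [:m:] * G'\<close> deg c'(3) show False
        by (auto simp: is_unit_poly_iff)
    qed
    ultimately obtain Q' where "Q = smult m Q'"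
      using m(2) by (auto simp: prime_elem_dvd_mult_iff elim!: dvdE)
    with Q c have "smult m (smult c' A) = smult m (G * Q')"
      by simp
    then have "G dvd smult c' A"
      using smult_cancel[OF c'(3)] by (metis dvd_triv_left)
    then show ?thesis
      by (rule less.hyps[OF c'(2,1)])
  qed
qed

lemma irreducible_dvd_mult_small_degree:
  fixes G :: "'a::field poly poly"
  assumes irr: "irreducible G" and deg: "degree G \<ge> 1"
  shows "U \<noteq> 0 \<Longrightarrow> degree U < degree G \<Longrightarrow> G dvd U * A \<Longrightarrow> G dvd A"
proof (induction "degree U" arbitrary: U rule: less_induct)
  case less
  define r where "r = pseudo_mod G U"
  obtain a q where aq: "a \<noteq> 0" "smult a G = U * q + r"
    using pseudo_mod(1)[OF less.prems(1)] unfolding r_def by blast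
  from aq(2) have r_eq: "r = smult a G - U * q"
    by simp
  have "r * A = smult a (G * A) - q * (U * A)"
    unfolding r_eq by (simp add: algebra_simps)
  also have "G dvd \<dots>"
    by (rule dvd_diff[OF dvd_smult[OF dvd_triv_left] dvd_mult[OF less.prems(3)]])
  finally have rA: "G dvd r * A" .
  show ?case
  proof (cases "r = 0")
    case False
    with pseudo_mod(2)[OF less.prems(1), of G] have "degree r < degree U"
      by (simp add: r_def)
    with less.hyps[OF this False _ rA] less.prems(2) show ?thesis
      by simp
  next
    case True
    with aq have eq: "smult a G = U * q"
      by simp
    have "G \<noteq> 0"
      using irr by auto
    with eq aq(1) have "q \<noteq> 0"
      by auto
    with arg_cong[OF eq, of degree] aq(1) less.prems(1) have "degree q + degree U = degree G"
      by (simp add: degree_mult_eq)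
    with less.prems(2) irreducible_smult_eq_mult[OF irr aq(1) eq] have "degree U = 0"
      by linarith
    then obtain u where "U = [:u:]"
      by (elim degree_eq_zeroE)
    with less.prems(1,3) have "u \<noteq> 0" "G dvd smult u A"
      by auto
    then show ?thesis
      using irreducible_dvd_smult_imp_dvd[OF irr deg] by blast
  qed
qed

lemma dvd_if_approximate_root:
  fixes h :: "'a::field \<Rightarrow> 'b::field" and G A :: "'a poly poly"
  assumes hom: "inj_comm_ring_hom h"
    and irr: "irreducible G" and n: "n \<ge> 1"
    and root: "eval_poly (fls_embed h n) G Y = 0"
    and deg_A: "degree A \<le> degree G" "deg_x A \<le> deg_x G"
    and Y: "fls_ord_ge Y mu" "mu \<le> 0"
    and Phi: "fls_ord_ge (Y - Ybar)
      (int (2 * deg_x G * degree G * n) - 2 * (int (degree G) - 1) * mu + 1)"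
    and A_Ybar: "fls_ord_ge (eval_poly (fls_embed h n) A Ybar)
      (int (2 * deg_x G * degree G * n) - (int (degree G) - 1) * mu + 1)"
  shows "G dvd A"
proof -
  interpret h: inj_comm_ring_hom h by fact
  have "G \<noteq> 0"
    using irr by auto
  have d: "degree G \<ge> 1"
    by (rule degree_ge_1_if_eval_fls_embed_eq_0[OF hom n \<open>G \<noteq> 0\<close> root])
  let ?c = "int (2 * deg_x G * degree G * n) - 2 * (int (degree G) - 1) * mu + 1"
  have "(int (degree G) - 1) * mu \<le> 0"
    using Y(2) d by (simp add: mult_nonneg_nonpos)
  with Y(2) have "mu \<le> ?c"
    by linarith
  from fls_ord_ge_eval_fls_embed_perturb[OF h.comm_ring_hom_axioms deg_A(1) Y this Phi, where n = n]
  have "fls_ord_ge (eval_poly (fls_embed h n) A Y)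
      (int (2 * deg_x G * degree G * n) - (int (degree G) - 1) * mu + 1)"
    using A_Ybar by (simp add: algebra_simps)
  then have "det (sylvester_matrix A G (degree G) (degree A)) = 0"
    by (rule sylvester_det_eq_0_if_high_order[OF hom n d deg_A root Y])
  then obtain U V where UV: "U * A + V * G = 0" "U \<noteq> 0" "degree U < degree G"
    using sylvester_det_eq_0[OF order.refl order.refl \<open>G \<noteq> 0\<close>] by blast
  from UV(1) have "G dvd U * A"
    by (metis dvd_minus_iff dvd_triv_right eq_neg_iff_add_eq_0)
  then show ?thesis
    using irreducible_dvd_mult_small_degree[OF irr d UV(2,3)] by blast
qed

end

theorem lemma4:
  fixes h :: "'a::field_char_0 \<Rightarrow> 'b::field_char_0"
    and G A :: "'a poly poly"
    and n :: nat and Y Ybar Phi :: "'b fls"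
    and N :: real
  assumes closure: "is_alg_closure_emb h"
    and irr: "irreducible G"
    and n_pos: "n \<ge> 1"
    and root: "eval_puiseux h n G Y = 0"
    and split: "Y = Ybar + Phi"
    and ordphi: "ord_x n Phi > ereal N"
    and N_pos: "N > 0"
    and N_bound: "ereal N \<ge> 2 * real (deg_x G) * real (deg_y G)
                     - 2 * min (ord_x n Y) 0 * (real (deg_y G) - 1)"
    and A_nz: "A \<noteq> 0"
    and A_degx: "deg_x A \<le> deg_x G"
    and A_degy: "deg_y A \<le> deg_y G"
    and A_ord: "ord_x n (eval_puiseux h n A Ybar) >
                  2 * real (deg_x G) * real (deg_y G) - min (ord_x n Y) 0 * (real (deg_y G) - 1)"
    and A_min: "\<And>B. B \<noteq> 0 \<Longrightarrow> deg_x B \<le> deg_x G \<Longrightarrow> deg_y B \<le> deg_y G \<Longrightarrow>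
                  ord_x n (eval_puiseux h n B Ybar) >
                    2 * real (deg_x G) * real (deg_y G) - min (ord_x n Y) 0 * (real (deg_y G) - 1)
                  \<Longrightarrow> tot_deg A \<le> tot_deg B"
  shows "\<exists>c. c \<noteq> 0 \<and> A = smult [:c:] G"
proof -
  have hom: "inj_comm_ring_hom h"
    using closure by (rule inj_comm_ring_hom_if_alg_closure_emb)
  have eval: "eval_puiseux h n P F = eval_poly (fls_embed h n) P F" for P F
    by (rule eval_puiseux_eq_eval_poly[OF inj_comm_ring_hom.axioms(1)[OF hom]])
  have factors: "\<And>c :: 'a poly. degree c \<ge> 1 \<Longrightarrow>
      \<exists>m. m dvd c \<and> degree m \<ge> 1 \<and> prime_elem [:m:]"
    by (rule exists_prime_const_poly_factor[OF closure])
  obtain mu where mu: "fls_ord_ge Y mu" "mu \<le> 0" "min (ord_x n Y) 0 = ereal (of_int mu / real n)"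
    using min_ord_x_0[OF n_pos] .
  let ?D = "int (2 * deg_x G * degree G * n)"
  have bounds:
    "2 * real (deg_x G) * real (degree G) - 2 * min (ord_x n Y) 0 * (real (degree G) - 1)
      = ereal (of_int (?D - 2 * (int (degree G) - 1) * mu) / real n)"
    "2 * real (deg_x G) * real (degree G) - min (ord_x n Y) 0 * (real (degree G) - 1)
      = ereal (of_int (?D - (int (degree G) - 1) * mu) / real n)"
    unfolding mu(3) using n_pos by (simp_all add: field_simps)
  from N_bound ordphi have "fls_ord_ge Phi (?D - 2 * (int (degree G) - 1) * mu + 1)"
    unfolding bounds by (intro fls_ord_ge_if_ord_x_gt[OF n_pos]) (metis le_less_trans)
  then have "fls_ord_ge (Y - Ybar) (?D - 2 * (int (degree G) - 1) * mu + 1)"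
    using split by simp
  moreover from A_ord
  have "fls_ord_ge (eval_poly (fls_embed h n) A Ybar) (?D - (int (degree G) - 1) * mu + 1)"
    unfolding bounds eval by (rule fls_ord_ge_if_ord_x_gt[OF n_pos])
  ultimately have "G dvd A"
    using dvd_if_approximate_root[OF factors hom irr n_pos root[unfolded eval] A_degy A_degx mu(1,2)]
    by blast
  then show ?thesis
    using const_multiple_if_dvd A_nz A_degx A_degy by blast
qed

end
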